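(* Let $F_2:\mathbb R^d\times\mathbb R^n\to\mathbb R^n$ be locally Lipschitz continuous with $|F_2(z,x)|\lesssim1+|x|+|z|$, and suppose there are $\kappa,D>0$ with $\langle F_2(z,x)-F_2(z,y),x-y\rangle\le D-\kappa|x-y|^2$ for all $x,y\in\mathbb R^n$, $z\in\mathbb R^d$. Let $\varsigma\in\mathcal C(\mathbb R_+,\mathbb R^n)$ with $\varsigma(0)=0$ and $z\in\mathcal C(\mathbb R_+,\mathbb R^d)$. (1) For any $x_0\in\mathbb R^n$ there are unique global solutions to $x(t)=x_0+\int_0^tF_2(z(s),x(s))\,ds+\varsigma_t$ and $y(t)=x_0-\int_0^ty(s)\,ds+\varsigma_t$. On any finite interval $[0,T]$, $|x(t)-y(t)|^2\lesssim\int_0^te^{-\kappa(t-s)}(1+|y(s)|+|z(s)|)^2\,ds$ for all $t\in[0,T]$; in particular $|x|_\infty\lesssim1+|x_0|+|\varsigma|_\infty+|z|_\infty$. (2) If in addition $\varsigma\in\mathcal C^\alpha([0,T],\mathbb R^n)$ for some $\alpha>0$, then $x\in\mathcal C^\alpha([0,T],\mathbb R^n)$ and $|x|_{\mathcal C^\alpha}\lesssim1+|x_0|+|z|_\infty+|\varsigma|_{\mathcal C^\alpha}$.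
   Context: Sup-norms and Hölder seminorms are taken over $[0,T]$. Implicit constants in $\lesssim$ do not depend on $x_0$, $\varsigma$, $z$. *)

theory Defs
  imports "HOL-Analysis.Analysis"
begin

definition loc_lipschitz :: "('a::metric_space \<Rightarrow> 'b::metric_space) \<Rightarrow> bool" where
  "loc_lipschitz f \<longleftrightarrow> (\<forall>p. \<exists>u>0. \<exists>L. L-lipschitz_on (cball p u) f)"

definition is_global_solution ::
  "(real \<Rightarrow> 'x::euclidean_space \<Rightarrow> 'x) \<Rightarrow> 'x \<Rightarrow> (real \<Rightarrow> 'x) \<Rightarrow> (real \<Rightarrow> 'x) \<Rightarrow> bool" where
  "is_global_solution G x0 noise x \<longleftrightarrow>
     continuous_on {0..} x \<and>
     (\<forall>t\<ge>0. (\<lambda>s. G s (x s)) integrable_on {0..t} \<and>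
             x t = x0 + integral {0..t} (\<lambda>s. G s (x s)) + noise t)"

definition sup_norm :: "real \<Rightarrow> (real \<Rightarrow> 'a::real_normed_vector) \<Rightarrow> real" where
  "sup_norm T f = (SUP t\<in>{0..T}. norm (f t))"

definition hoelder_on :: "real \<Rightarrow> real \<Rightarrow> (real \<Rightarrow> 'a::real_normed_vector) \<Rightarrow> bool" where
  "hoelder_on \<alpha> T f \<longleftrightarrow>
     (\<exists>C. \<forall>s\<in>{0..T}. \<forall>t\<in>{0..T}. norm (f t - f s) \<le> C * \<bar>t - s\<bar> powr \<alpha>)"

definition hoelder_seminorm :: "real \<Rightarrow> real \<Rightarrow> (real \<Rightarrow> 'a::real_normed_vector) \<Rightarrow> real" where
  "hoelder_seminorm \<alpha> T f =
     (SUP st\<in>{(s,t). s\<in>{0..T} \<and> t\<in>{0..T} \<and> s \<noteq> t}.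
        norm (f (snd st) - f (fst st)) / \<bar>snd st - fst st\<bar> powr \<alpha>)"

definition hoelder_norm :: "real \<Rightarrow> real \<Rightarrow> (real \<Rightarrow> 'a::real_normed_vector) \<Rightarrow> real" where
  "hoelder_norm \<alpha> T f = sup_norm T f + hoelder_seminorm \<alpha> T f"

end

theory Submission
  imports Defs
begin

text \<open>
  All estimates come from one energy inequality: if \<open>E t = E 0 + \<integral>\<^sub>0\<^sup>t g\<close> and
  \<open>2 \<langle>g, E\<rangle> + a |E|\<^sup>2 \<le> h\<close>, then \<open>exp (a t) |E t|\<^sup>2 \<le> |E 0|\<^sup>2 + \<integral>\<^sub>0\<^sup>t exp (a s) h s ds\<close>.
  Dissipativity and Young's inequality supply such an \<open>h\<close> of linear growth for \<open>E = x - \<sigma>\<close> with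
  \<open>a = 0\<close>, which gives the a priori bound, and for \<open>E = x - y\<close>, \<open>y\<close> the solution of the linear
  equation, with \<open>a = \<kappa>\<close>, which gives the comparison estimate. For the difference of two solutions a
  local Lipschitz constant \<open>L\<close> gives \<open>h = 0\<close> with \<open>a = -2L\<close>, hence uniqueness.

  For existence, \<open>F\<close> is truncated by the nearest-point projection onto a ball, which makes it globally
  Lipschitz; the truncated equation is solved by a contraction in a sup norm with exponential
  (Bielecki) weight, and the a priori bound shows that the solution never leaves the ball. Solutions
  on \<open>[0, n]\<close> agree by uniqueness and glue to a global solution. Finally \<open>x - \<sigma>\<close> is Lipschitz with
  constant \<open>sup |F(z, x)|\<close>, which the a priori bound controls; this gives the Hoelder estimate.
\<close>

lemma loc_lipschitz_imp_continuous:
  fixes f :: "'a::metric_space \<Rightarrow> 'b::metric_space"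
  assumes "loc_lipschitz f"
  shows "continuous_on UNIV f"
proof -
  have "continuous (at p) f" for p
  proof -
    obtain u L where "u > 0" "L-lipschitz_on (cball p u) f"
      using assms unfolding loc_lipschitz_def by blast
    moreover have "p \<in> interior (cball p u)" if "u > 0"
      using that by (meson centre_in_ball interior_maximal ball_subset_cball open_ball subsetD)
    ultimately show ?thesis
      using lipschitz_on_continuous_on continuous_on_interior by blast
  qed
  then show ?thesis by (simp add: continuous_at_imp_continuous_on)
qed

lemma lipschitz_imp_loc_lipschitz:
  fixes f :: "'a::metric_space \<Rightarrow> 'b::metric_space"
  assumes "L-lipschitz_on UNIV f"
  shows "loc_lipschitz f"
  unfolding loc_lipschitz_def using assms by (meson lipschitz_on_subset subset_UNIV zero_less_one)

lemma loc_lipschitz_lipschitz_on_compact: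
  fixes f :: "'a::metric_space \<Rightarrow> 'b::metric_space"
  assumes "loc_lipschitz f" "compact K"
  obtains L where "L-lipschitz_on K f"
proof -
  have ll: "local_lipschitz {0::real} K (\<lambda>_. f)"
    unfolding local_lipschitz_def
  proof (intro ballI)
    fix x assume "x \<in> K"
    obtain u L where "u > 0" "L-lipschitz_on (cball x u) f"
      using assms(1) unfolding loc_lipschitz_def by blast
    then show "\<exists>u>0. \<exists>L. \<forall>t\<in>cball t u \<inter> {0}. L-lipschitz_on (cball x u \<inter> K) f" for t
      by (meson Int_lower1 lipschitz_on_subset)
  qed
  obtain L where "\<And>t. t \<in> {0::real} \<Longrightarrow> L-lipschitz_on K f"
    using local_lipschitz_compact_implies_lipschitz[OF ll assms(2)] by auto
  then show ?thesis using that by blast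
qed

lemma continuous_on_compose_loc_lipschitz:
  fixes F :: "'z::metric_space \<Rightarrow> 'x::metric_space \<Rightarrow> 'b::metric_space"
  assumes "loc_lipschitz (\<lambda>(z, x). F z x)" "continuous_on S z" "continuous_on S x"
  shows "continuous_on S (\<lambda>s. F (z s) (x s))"
  using continuous_on_compose2[OF loc_lipschitz_imp_continuous[OF assms(1)], of S "\<lambda>s. (z s, x s)"]
    assms(2,3) by (auto intro: continuous_on_Pair)

lemma loc_lipschitz_uniform_on_ball:
  fixes F :: "'z::metric_space \<Rightarrow> 'x::euclidean_space \<Rightarrow> 'b::real_normed_vector"
    and z :: "real \<Rightarrow> 'z"
  assumes lip: "loc_lipschitz (\<lambda>(z, x). F z x)" and zc: "continuous_on {0..T} z"
  obtains L where "0 \<le> L"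
    "\<And>s v w. s \<in> {0..T} \<Longrightarrow> norm v \<le> R \<Longrightarrow> norm w \<le> R \<Longrightarrow>
       norm (F (z s) v - F (z s) w) \<le> L * norm (v - w)"
proof -
  have "compact (z ` {0..T} \<times> cball (0::'x) R)"
    by (intro compact_Times compact_continuous_image zc compact_Icc compact_cball)
  then obtain L where L: "L-lipschitz_on (z ` {0..T} \<times> cball 0 R) (\<lambda>(z, x). F z x)"
    using loc_lipschitz_lipschitz_on_compact[OF lip] by blast
  show ?thesis
  proof (rule that[OF lipschitz_on_nonneg[OF L]])
    fix s and v w :: 'x assume "s \<in> {0..T}" "norm v \<le> R" "norm w \<le> R"
    then have "dist ((\<lambda>(z, x). F z x) (z s, v)) ((\<lambda>(z, x). F z x) (z s, w)) \<le> L * dist (z s, v) (z s, w)"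
      by (intro lipschitz_onD[OF L]) auto
    then show "norm (F (z s) v - F (z s) w) \<le> L * norm (v - w)"
      by (simp add: dist_norm dist_Pair_Pair)
  qed
qed

lemma loc_lipschitz_uminus_snd: "loc_lipschitz (\<lambda>(z::'z::metric_space, x::'x::real_normed_vector). - x)"
proof (rule lipschitz_imp_loc_lipschitz[of 1])
  show "1-lipschitz_on UNIV (\<lambda>(z::'z, x::'x). - x)"
  proof (rule lipschitz_onI)
    fix p q :: "'z \<times> 'x"
    show "dist ((\<lambda>(z, x). - x) p) ((\<lambda>(z, x). - x) q) \<le> 1 * dist p q"
      using dist_snd_le[of p q] by (simp add: case_prod_beta dist_minus)
  qed simp
qed

lemma sup_norm_upper:
  fixes f :: "real \<Rightarrow> 'a::real_normed_vector"
  assumes "continuous_on {0..T} f" "t \<in> {0..T}"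
  shows "norm (f t) \<le> sup_norm T f"
proof -
  have "compact ((\<lambda>t. norm (f t)) ` {0..T})"
    by (intro compact_continuous_image continuous_intros assms(1)) auto
  then have "bdd_above ((\<lambda>t. norm (f t)) ` {0..T})"
    by (intro bounded_imp_bdd_above compact_imp_bounded)
  then show ?thesis unfolding sup_norm_def by (rule cSUP_upper[OF assms(2)])
qed

lemma sup_norm_least:
  fixes f :: "real \<Rightarrow> 'a::real_normed_vector"
  assumes "0 \<le> T" "\<And>t. t \<in> {0..T} \<Longrightarrow> norm (f t) \<le> B"
  shows "sup_norm T f \<le> B"
  unfolding sup_norm_def using assms by (intro cSUP_least) auto

lemma sup_norm_nonneg:
  fixes f :: "real \<Rightarrow> 'a::real_normed_vector"
  assumes "continuous_on {0..T} f" "0 \<le> T"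
  shows "0 \<le> sup_norm T f"
  using sup_norm_upper[OF assms(1), of 0] assms(2) by (auto intro: order_trans[OF norm_ge_zero])

lemma hoelder_seminorm_upper:
  fixes f :: "real \<Rightarrow> 'a::real_normed_vector"
  assumes h: "hoelder_on \<alpha> T f" and st: "s \<in> {0..T}" "t \<in> {0..T}" "s \<noteq> t"
  shows "norm (f t - f s) / \<bar>t - s\<bar> powr \<alpha> \<le> hoelder_seminorm \<alpha> T f"
proof -
  obtain C where C: "\<forall>s\<in>{0..T}. \<forall>t\<in>{0..T}. norm (f t - f s) \<le> C * \<bar>t - s\<bar> powr \<alpha>"
    using h unfolding hoelder_on_def by blast
  let ?A = "{(s, t). s \<in> {0..T} \<and> t \<in> {0..T} \<and> s \<noteq> t}"
  let ?q = "\<lambda>st. norm (f (snd st) - f (fst st)) / \<bar>snd st - fst st\<bar> powr \<alpha>"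
  have "bdd_above (?q ` ?A)"
  proof (rule bdd_aboveI2)
    fix st assume "st \<in> ?A"
    then obtain a b where "st = (a, b)" "a \<in> {0..T}" "b \<in> {0..T}" "a \<noteq> b" by auto
    then show "?q st \<le> C" using C by (simp add: pos_divide_le_eq)
  qed
  moreover have "(s, t) \<in> ?A" using st by auto
  ultimately have "?q (s, t) \<le> Sup (?q ` ?A)" by (intro cSUP_upper)
  then show ?thesis unfolding hoelder_seminorm_def by simp
qed

lemma hoelder_seminorm_nonneg:
  fixes f :: "real \<Rightarrow> 'a::real_normed_vector"
  assumes "hoelder_on \<alpha> T f" and "0 < T"
  shows "0 \<le> hoelder_seminorm \<alpha> T f"
  using hoelder_seminorm_upper[OF assms(1), of 0 T] assms(2)
  by (smt (verit) atLeastAtMost_iff divide_nonneg_nonneg norm_ge_zero powr_ge_zero)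

lemma hoelder_seminorm_least:
  fixes f :: "real \<Rightarrow> 'a::real_normed_vector"
  assumes "0 < T"
    and "\<And>s t. s \<in> {0..T} \<Longrightarrow> t \<in> {0..T} \<Longrightarrow> s \<noteq> t \<Longrightarrow> norm (f t - f s) / \<bar>t - s\<bar> powr \<alpha> \<le> B"
  shows "hoelder_seminorm \<alpha> T f \<le> B"
  unfolding hoelder_seminorm_def
proof (rule cSUP_least)
  have "(0, T) \<in> {(s, t). s \<in> {0..T} \<and> t \<in> {0..T} \<and> s \<noteq> t}" using assms(1) by auto
  then show "{(s, t). s \<in> {0..T} \<and> t \<in> {0..T} \<and> s \<noteq> t} \<noteq> {}" by blast
qed (use assms(2) in auto)

section \<open>The energy inequality\<close>

lemma energy_estimate:
  fixes g E :: "real \<Rightarrow> 'a::euclidean_space" and h :: "real \<Rightarrow> real"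
  assumes gc: "continuous_on {0..T} g" and hc: "continuous_on {0..T} h"
    and E: "\<And>t. t \<in> {0..T} \<Longrightarrow> E t = E 0 + integral {0..t} g"
    and ineq: "\<And>t. t \<in> {0..T} \<Longrightarrow> 2 * inner (g t) (E t) + a * (norm (E t))\<^sup>2 \<le> h t"
    and t: "t \<in> {0..T}"
  shows "exp (a * t) * (norm (E t))\<^sup>2 \<le> (norm (E 0))\<^sup>2 + integral {0..t} (\<lambda>s. exp (a * s) * h s)"
proof -
  define k where "k s = exp (a * s) * h s" for s
  define \<Phi> where "\<Phi> t = exp (a * t) * inner (E t) (E t) - integral {0..t} k" for t
  have kc: "continuous_on {0..T} k" unfolding k_def by (intro continuous_intros hc)
  have dE: "(E has_vector_derivative g s) (at s within {0..T})" if "s \<in> {0..T}" for s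
  proof (rule has_vector_derivative_transform[OF that])
    show "((\<lambda>t. E 0 + integral {0..t} g) has_vector_derivative g s) (at s within {0..T})"
      using has_vector_derivative_add[OF has_vector_derivative_const integral_has_vector_derivative[OF gc that]]
      by simp
  qed (rule E)
  have dK: "((\<lambda>u. integral {0..u} k) has_real_derivative k s) (at s within {0..T})"
    if "s \<in> {0..T}" for s
    using integral_has_vector_derivative[OF kc that]
    by (simp add: has_real_derivative_iff_has_vector_derivative)
  have dN: "((\<lambda>t. inner (E t) (E t)) has_real_derivative 2 * inner (g s) (E s)) (at s within {0..T})"
    if "s \<in> {0..T}" for s
  proof -
    have "(E has_derivative (\<lambda>x. x *\<^sub>R g s)) (at s within {0..T})"
      using dE[OF that] by (simp add: has_vector_derivative_def)
    then have "((\<lambda>t. inner (E t) (E t)) has_derivative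
        (\<lambda>x. inner (E s) (x *\<^sub>R g s) + inner (x *\<^sub>R g s) (E s))) (at s within {0..T})"
      by (intro has_derivative_inner)
    then show ?thesis
      by (rule has_derivative_imp_has_field_derivative) (simp add: inner_commute algebra_simps)
  qed
  have d\<Phi>: "(\<Phi> has_real_derivative
      exp (a * s) * (2 * inner (g s) (E s) + a * inner (E s) (E s)) - k s) (at s within {0..T})"
    if "s \<in> {0..T}" for s
  proof -
    have "((\<lambda>t. exp (a * t)) has_real_derivative exp (a * s) * a) (at s within {0..T})"
      by (auto intro!: derivative_eq_intros)
    from DERIV_diff[OF DERIV_mult[OF this dN[OF that]] dK[OF that]] show ?thesis
      unfolding \<Phi>_def by (simp add: algebra_simps)
  qed
  have d\<Phi>_nonpos: "exp (a * s) * (2 * inner (g s) (E s) + a * inner (E s) (E s)) - k s \<le> 0"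
    if "s \<in> {0..T}" for s
    using ineq[OF that] unfolding k_def by (simp add: power2_norm_eq_inner)
  have "\<Phi> t \<le> \<Phi> 0"
  proof (rule DERIV_nonpos_imp_decreasing_open[of 0 t \<Phi>])
    show "0 \<le> t" using t by simp
    fix s assume s: "0 < s" "s < t"
    then have "s \<in> {0..T}" "at s within {0..T} = at s"
      using t by (auto intro: at_within_Icc_at)
    then show "\<exists>y. (\<Phi> has_real_derivative y) (at s) \<and> y \<le> 0"
      using d\<Phi> d\<Phi>_nonpos by metis
  next
    have "continuous_on {0..T} \<Phi>"
      using d\<Phi> DERIV_continuous by (auto simp: continuous_on_eq_continuous_within) blast
    then show "continuous_on {0..t} \<Phi>" by (rule continuous_on_subset) (use t in auto)
  qed
  then show ?thesis
    unfolding \<Phi>_def k_def by (simp add: power2_norm_eq_inner)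
qed

lemma dissipative_inner_bound:
  fixes u v w :: "'a::real_inner"
  assumes diss: "inner (u - v) w \<le> D - \<kappa> * (norm w)\<^sup>2" and k: "0 < k"
  shows "2 * inner u w \<le> 2 * D - (2 * \<kappa> - k) * (norm w)\<^sup>2 + (norm v)\<^sup>2 / k"
proof -
  have "inner u w \<le> D - \<kappa> * (norm w)\<^sup>2 + norm v * norm w"
    using diss Cauchy_Schwarz_ineq2[of v w] by (simp add: inner_diff_left)
  moreover have "2 * (norm v * norm w) \<le> k * (norm w)\<^sup>2 + (norm v)\<^sup>2 / k"
  proof -
    have "0 \<le> (k * norm w - norm v)\<^sup>2 / k" using k by simp
    also have "\<dots> = k * (norm w)\<^sup>2 + (norm v)\<^sup>2 / k - 2 * (norm v * norm w)"
      using k by (simp add: field_simps power2_eq_square)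
    finally show ?thesis by simp
  qed
  ultimately show ?thesis by (simp add: algebra_simps)
qed

lemma uminus_dissipative: "inner (- x - - y) (x - y) \<le> 0 - 1 * (norm (x - y))\<^sup>2"
  by (simp add: inner_diff_left inner_diff_right power2_norm_eq_inner)

lemma integral_exp_kernel:
  fixes a t :: real and h :: "real \<Rightarrow> real"
  shows "exp (- a * t) * integral {0..t} (\<lambda>s. exp (a * s) * h s) =
    integral {0..t} (\<lambda>s. exp (- a * (t - s)) * h s)"
proof -
  have "exp (- a * t) * integral {0..t} (\<lambda>s. exp (a * s) * h s) =
      integral {0..t} (\<lambda>s. exp (- a * t) * (exp (a * s) * h s))"
    by simp
  also have "\<dots> = integral {0..t} (\<lambda>s. exp (- a * (t - s)) * h s)"
  proof (rule integral_cong)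
    fix s
    have "exp (- a * t) * exp (a * s) = exp (- a * (t - s))"
      by (simp add: algebra_simps flip: exp_add)
    then show "exp (- a * t) * (exp (a * s) * h s) = exp (- a * (t - s)) * h s"
      by (simp add: mult.assoc[symmetric])
  qed
  finally show ?thesis .
qed

lemma linear_growth_forcing_bound:
  fixes F :: "'z::real_normed_vector \<Rightarrow> 'x::real_normed_vector \<Rightarrow> 'x"
  assumes growth: "\<And>z x. norm (F z x) \<le> c * (1 + norm x + norm z)" and \<kappa>: "0 < \<kappa>" and D0: "0 \<le> D"
  shows "2 * D + (norm (F z y + y))\<^sup>2 / \<kappa> \<le> (2 * D + (c + 1)\<^sup>2 / \<kappa>) * (1 + norm y + norm z)\<^sup>2"
proof -
  define Q where "Q = 1 + norm y + norm z"
  have "norm (F z y + y) \<le> norm (F z y) + norm y"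
    by (rule norm_triangle_ineq)
  also have "\<dots> \<le> c * Q + Q"
    using growth[of z y] norm_ge_zero[of z] unfolding Q_def by linarith
  finally have "norm (F z y + y) \<le> (c + 1) * Q"
    by (simp add: algebra_simps)
  then have "(norm (F z y + y))\<^sup>2 / \<kappa> \<le> (c + 1)\<^sup>2 / \<kappa> * Q\<^sup>2"
    using \<kappa> by (simp add: divide_right_mono power_mono flip: power_mult_distrib)
  moreover have "2 * D \<le> 2 * D * Q\<^sup>2"
    using D0 by (simp add: Q_def mult_le_cancel_left1 one_le_power)
  ultimately show ?thesis
    unfolding Q_def by (simp add: algebra_simps)
qed

definition solves_on ::
  "real \<Rightarrow> (real \<Rightarrow> 'x \<Rightarrow> 'x) \<Rightarrow> 'x \<Rightarrow> (real \<Rightarrow> 'x) \<Rightarrow> (real \<Rightarrow> 'x::real_normed_vector) \<Rightarrow> bool" where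
  "solves_on T G x0 noise x \<longleftrightarrow>
     continuous_on {0..T} x \<and> (\<forall>t\<in>{0..T}. x t = x0 + integral {0..t} (\<lambda>s. G s (x s)) + noise t)"

lemma solves_on_subset: "solves_on T G x0 \<sigma> x \<Longrightarrow> T' \<le> T \<Longrightarrow> solves_on T' G x0 \<sigma> x"
  unfolding solves_on_def by (auto intro: continuous_on_subset)

lemma global_solution_solves_on: "is_global_solution G x0 \<sigma> x \<Longrightarrow> solves_on T G x0 \<sigma> x"
  unfolding is_global_solution_def solves_on_def by (auto intro: continuous_on_subset)

lemma solves_on_cong:
  assumes "\<And>s. s \<in> {0..T} \<Longrightarrow> G s (x s) = G' s (x s)"
  shows "solves_on T G x0 \<sigma> x \<longleftrightarrow> solves_on T G' x0 \<sigma> x"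
proof -
  have "integral {0..t} (\<lambda>s. G s (x s)) = integral {0..t} (\<lambda>s. G' s (x s))" if "t \<in> {0..T}" for t
    using assms that by (intro integral_cong) auto
  then show ?thesis unfolding solves_on_def by auto
qed

lemma solves_on_diff:
  fixes x1 x2 :: "real \<Rightarrow> 'x::banach"
  assumes x1: "solves_on T G1 x0 \<sigma> x1" and x2: "solves_on T G2 x0 \<sigma> x2"
    and c1: "continuous_on {0..T} (\<lambda>s. G1 s (x1 s))" and c2: "continuous_on {0..T} (\<lambda>s. G2 s (x2 s))"
    and t: "t \<in> {0..T}"
  shows "x1 t - x2 t = integral {0..t} (\<lambda>s. G1 s (x1 s) - G2 s (x2 s))"
proof -
  have "(\<lambda>s. G1 s (x1 s)) integrable_on {0..t}" "(\<lambda>s. G2 s (x2 s)) integrable_on {0..t}"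
    using t by (auto intro!: integrable_continuous_real continuous_on_subset[OF c1]
        continuous_on_subset[OF c2])
  with x1 x2 t show ?thesis unfolding solves_on_def by (simp add: integral_diff)
qed

lemma solves_on_unique:
  fixes F :: "'z::metric_space \<Rightarrow> 'x::euclidean_space \<Rightarrow> 'x" and z :: "real \<Rightarrow> 'z"
  assumes lip: "loc_lipschitz (\<lambda>(z, x). F z x)" and zc: "continuous_on {0..T} z"
    and x1: "solves_on T (\<lambda>s v. F (z s) v) x0 \<sigma> x1" and x2: "solves_on T (\<lambda>s v. F (z s) v) x0 \<sigma> x2"
    and t: "t \<in> {0..T}"
  shows "x1 t = x2 t"
proof -
  have c1: "continuous_on {0..T} x1" and c2: "continuous_on {0..T} x2"
    using x1 x2 unfolding solves_on_def by auto
  define R where "R = max (sup_norm T x1) (sup_norm T x2)"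
  obtain L where "0 \<le> L" and L: "\<And>s v w. s \<in> {0..T} \<Longrightarrow> norm v \<le> R \<Longrightarrow> norm w \<le> R \<Longrightarrow>
       norm (F (z s) v - F (z s) w) \<le> L * norm (v - w)"
    using loc_lipschitz_uniform_on_ball[OF lip zc] by blast
  define g where "g s = F (z s) (x1 s) - F (z s) (x2 s)" for s
  have Fc1: "continuous_on {0..T} (\<lambda>s. F (z s) (x1 s))"
    and Fc2: "continuous_on {0..T} (\<lambda>s. F (z s) (x2 s))"
    using continuous_on_compose_loc_lipschitz[OF lip zc] c1 c2 by auto
  have diff: "x1 s - x2 s = integral {0..s} g" if "s \<in> {0..T}" for s
    unfolding g_def by (rule solves_on_diff[OF x1 x2 Fc1 Fc2 that])
  have "exp (- 2 * L * t) * (norm (x1 t - x2 t))\<^sup>2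
      \<le> (norm (x1 0 - x2 0))\<^sup>2 + integral {0..t} (\<lambda>s. exp (- 2 * L * s) * 0)"
  proof (rule energy_estimate[OF _ _ _ _ t])
    show "continuous_on {0..T} g" unfolding g_def by (intro continuous_intros Fc1 Fc2)
    fix s assume s: "s \<in> {0..T}"
    show "x1 s - x2 s = (x1 0 - x2 0) + integral {0..s} g"
      using diff[OF s] diff[of 0] s by simp
    have "norm (g s) \<le> L * norm (x1 s - x2 s)"
      unfolding g_def using s sup_norm_upper[OF c1 s] sup_norm_upper[OF c2 s]
      by (intro L) (auto simp: R_def)
    then have "inner (g s) (x1 s - x2 s) \<le> L * norm (x1 s - x2 s) * norm (x1 s - x2 s)"
      using norm_cauchy_schwarz[of "g s" "x1 s - x2 s"] by (meson mult_right_mono norm_ge_zero order_trans)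
    then show "2 * inner (g s) (x1 s - x2 s) + - 2 * L * (norm (x1 s - x2 s))\<^sup>2 \<le> 0"
      by (simp add: power2_eq_square)
  qed simp
  moreover have "x1 0 - x2 0 = 0" using diff[of 0] t by simp
  ultimately show ?thesis by (simp add: mult_le_0_iff)
qed

lemma solves_on_increment_bound:
  fixes G :: "real \<Rightarrow> 'a::banach \<Rightarrow> 'a"
  assumes x: "solves_on T G x0 \<sigma> x" and Gc: "continuous_on {0..T} (\<lambda>s. G s (x s))"
    and M: "\<And>s. s \<in> {0..T} \<Longrightarrow> norm (G s (x s)) \<le> M"
    and st: "s \<in> {0..T}" "t \<in> {0..T}"
  shows "norm (x t - x s) \<le> M * \<bar>t - s\<bar> + norm (\<sigma> t - \<sigma> s)"
proof -
  have ordered: "norm (x b - x a) \<le> M * (b - a) + norm (\<sigma> b - \<sigma> a)"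
    if ab: "a \<in> {0..T}" "b \<in> {0..T}" "a \<le> b" for a b
  proof -
    have int: "(\<lambda>r. G r (x r)) integrable_on {0..b}"
      using ab by (intro integrable_continuous_real continuous_on_subset[OF Gc]) auto
    have "integral {0..a} (\<lambda>r. G r (x r)) + integral {a..b} (\<lambda>r. G r (x r))
        = integral {0..b} (\<lambda>r. G r (x r))"
      using ab by (intro Henstock_Kurzweil_Integration.integral_combine int) auto
    then have "x b - x a = integral {a..b} (\<lambda>r. G r (x r)) + (\<sigma> b - \<sigma> a)"
      using x ab by (auto simp: solves_on_def algebra_simps)
    then have "norm (x b - x a) \<le> norm (integral {a..b} (\<lambda>r. G r (x r))) + norm (\<sigma> b - \<sigma> a)"
      by (simp add: norm_triangle_ineq)
    also have "norm (integral {a..b} (\<lambda>r. G r (x r))) \<le> integral {a..b} (\<lambda>r. M)"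
      using ab by (intro integral_norm_bound_integral integrable_subinterval_real[OF int] M) auto
    finally show ?thesis using ab by (simp add: mult.commute)
  qed
  show ?thesis
  proof (cases "s \<le> t")
    case True
    then show ?thesis using ordered[OF st] by simp
  next
    case False
    then show ?thesis
      using ordered[OF st(2,1)] by (simp add: norm_minus_commute abs_minus_commute)
  qed
qed

section \<open>Existence for globally Lipschitz nonlinearities\<close>

lemma bielecki_integral_bound:
  fixes f :: "real \<Rightarrow> 'a::banach"
  assumes L: "0 < L" and d: "0 \<le> d" and u: "0 \<le> u" and f: "f integrable_on {0..u}"
    and bound: "\<And>s. s \<in> {0..u} \<Longrightarrow> norm (f s) \<le> L * d * exp (2 * L * s)"
  shows "exp (- 2 * L * u) * norm (integral {0..u} f) \<le> d / 2"
proof -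
  have "((\<lambda>s. d / 2 * exp (2 * L * s)) has_real_derivative L * d * exp (2 * L * s)) (at s within {0..u})"
    for s
    by (auto intro!: derivative_eq_intros)
  then have "((\<lambda>s. L * d * exp (2 * L * s)) has_integral d / 2 * exp (2 * L * u) - d / 2 * exp (2 * L * 0)) {0..u}"
    using u by (intro fundamental_theorem_of_calculus) (simp_all add: has_real_derivative_iff_has_vector_derivative)
  then have exp_int: "((\<lambda>s. L * d * exp (2 * L * s)) has_integral d / 2 * (exp (2 * L * u) - 1)) {0..u}"
    by (simp add: right_diff_distrib)
  have "norm (integral {0..u} f) \<le> integral {0..u} (\<lambda>s. L * d * exp (2 * L * s))"
    by (rule integral_norm_bound_integral[OF f has_integral_integrable[OF exp_int] bound])
  also have "\<dots> = d / 2 * (exp (2 * L * u) - 1)"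
    by (rule integral_unique[OF exp_int])
  finally have "norm (integral {0..u} f) \<le> d / 2 * (exp (2 * L * u) - 1)" .
  then have "exp (- 2 * L * u) * norm (integral {0..u} f) \<le> exp (- 2 * L * u) * (d / 2 * (exp (2 * L * u) - 1))"
    by (intro mult_left_mono) auto
  also have "\<dots> = d / 2 * (1 - exp (- 2 * L * u))"
    by (simp add: algebra_simps flip: exp_add)
  also have "\<dots> \<le> d / 2" using d by (simp add: mult_left_le)
  finally show ?thesis .
qed

lemma ext_cont_bcontfun:
  fixes f :: "real \<Rightarrow> 'a::metric_space"
  assumes "continuous_on {a..b} f"
  shows "ext_cont f a b \<in> bcontfun"
  using assms
  by (auto intro!: continuous_on_ext_cont simp: bcontfun_def)
    (auto simp: ext_cont_def intro!: clamp_bounded compact_imp_bounded[OF compact_continuous_image])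

lemma solves_on_exists_lipschitz:
  fixes G :: "real \<Rightarrow> 'a::euclidean_space \<Rightarrow> 'a"
  assumes T: "0 \<le> T" and L: "0 < L"
    and Gc: "\<And>x. continuous_on {0..T} x \<Longrightarrow> continuous_on {0..T} (\<lambda>s. G s (x s))"
    and lip: "\<And>s v w. s \<in> {0..T} \<Longrightarrow> norm (G s v - G s w) \<le> L * norm (v - w)"
    and \<sigma>c: "continuous_on {0..T} \<sigma>"
  obtains x where "solves_on T G x0 \<sigma> x"
proof -
  \<comment> \<open>Write \<open>x = W g\<close>. The sup norm of \<open>g\<close> is a Bielecki norm of \<open>x\<close>, in which the Picard map \<open>\<Phi>\<close>
    is a 1/2-contraction; \<open>ext_cont\<close> extends \<open>\<Phi> g\<close> constantly outside \<open>[0, T]\<close> so that \<open>\<Psi>\<close> acts on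
    the complete space of bounded continuous functions on the real line.\<close>
  define W where "W g s = exp (2 * L * s) *\<^sub>R g s" for g :: "real \<Rightarrow> 'a" and s
  define \<Phi> where "\<Phi> g t = exp (- 2 * L * t) *\<^sub>R (x0 + integral {0..t} (\<lambda>s. G s (W g s)) + \<sigma> t)"
    for g t
  have GWc: "continuous_on {0..T} (\<lambda>s. G s (W g s))" if "continuous_on {0..T} g" for g
    unfolding W_def by (intro Gc continuous_intros that)
  have \<Phi>c: "continuous_on {0..T} (\<Phi> g)" if "continuous_on {0..T} g" for g
    unfolding \<Phi>_def
    by (intro continuous_intros \<sigma>c indefinite_integral_continuous_1 integrable_continuous_real GWc that)
  define \<Psi> where "\<Psi> g = Bcontfun (ext_cont (\<Phi> (apply_bcontfun g)) 0 T)" for g :: "real \<Rightarrow>\<^sub>C 'a"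
  have \<Psi>_apply: "apply_bcontfun (\<Psi> g) t = \<Phi> (apply_bcontfun g) (clamp 0 T t)" for g t
    unfolding \<Psi>_def using ext_cont_bcontfun[OF \<Phi>c[OF continuous_on_apply_bcontfun]]
    by (simp add: Bcontfun_inverse ext_cont_def)
  have contraction: "dist (\<Psi> g1) (\<Psi> g2) \<le> 1/2 * dist g1 g2" for g1 g2
  proof (rule dist_bound)
    fix t
    define u where "u = clamp 0 T t"
    have u: "u \<in> {0..T}" unfolding u_def using clamp_in_interval[of 0 T t] T by simp
    have int: "(\<lambda>s. G s (W (apply_bcontfun g) s)) integrable_on {0..u}" for g
      using u by (intro integrable_continuous_real continuous_on_subset[OF GWc]) auto
    have "\<Phi> g1 u - \<Phi> g2 u =
        exp (- 2 * L * u) *\<^sub>R integral {0..u} (\<lambda>s. G s (W g1 s) - G s (W g2 s))"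
      unfolding \<Phi>_def by (simp add: integral_diff[OF int int] scaleR_diff_right[symmetric])
    moreover have "exp (- 2 * L * u) * norm (integral {0..u} (\<lambda>s. G s (W g1 s) - G s (W g2 s)))
        \<le> dist g1 g2 / 2"
    proof (rule bielecki_integral_bound[OF L zero_le_dist])
      show "0 \<le> u" using u by simp
      show "(\<lambda>s. G s (W g1 s) - G s (W g2 s)) integrable_on {0..u}"
        by (intro integrable_diff int)
      fix s assume "s \<in> {0..u}"
      then have "norm (G s (W g1 s) - G s (W g2 s)) \<le> L * norm (W g1 s - W g2 s)"
        using u by (intro lip) auto
      also have "norm (W g1 s - W g2 s) = exp (2 * L * s) * dist (g1 s) (g2 s)"
        unfolding W_def by (simp add: dist_norm flip: scaleR_diff_right)
      also have "dist (g1 s) (g2 s) \<le> dist g1 g2" by (rule dist_bounded)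
      finally show "norm (G s (W g1 s) - G s (W g2 s)) \<le> L * dist g1 g2 * exp (2 * L * s)"
        using L by (simp add: mult_left_mono mult_ac)
    qed
    ultimately show "dist (\<Psi> g1 t) (\<Psi> g2 t) \<le> 1/2 * dist g1 g2"
      by (simp add: \<Psi>_apply dist_norm u_def[symmetric])
  qed
  obtain g where g: "\<Psi> g = g"
    using banach_fix_type[of "1/2" \<Psi>] contraction by auto
  show ?thesis
  proof (rule that)
    show "solves_on T G x0 \<sigma> (W g)"
      unfolding solves_on_def
    proof (intro conjI ballI)
      show "continuous_on {0..T} (W g)" unfolding W_def by (intro continuous_intros) simp
      fix t assume t: "t \<in> {0..T}"
      have "g t = \<Phi> g t" using \<Psi>_apply[of g t] g t by simp
      then show "W g t = x0 + integral {0..t} (\<lambda>s. G s (W g s)) + \<sigma> t"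
        unfolding W_def \<Phi>_def by (simp flip: exp_add)
    qed
  qed
qed

lemma solves_on_exists_truncated:
  fixes F :: "'z::real_normed_vector \<Rightarrow> 'x::euclidean_space \<Rightarrow> 'x" and z :: "real \<Rightarrow> 'z"
  assumes lip: "loc_lipschitz (\<lambda>(z, x). F z x)" and R: "0 < R"
    and T: "0 \<le> T" and zc: "continuous_on {0..T} z" and \<sigma>c: "continuous_on {0..T} \<sigma>"
  obtains x where "solves_on T (\<lambda>s v. F (z s) (closest_point (cball 0 R) v)) x0 \<sigma> x"
proof -
  define P where "P = closest_point (cball (0::'x) R)"
  have P: "norm (P v) \<le> R" "dist (P v) (P w) \<le> dist v w" for v w
    using closest_point_in_set[of "cball 0 R" v] R unfolding P_def
    by (auto intro: closest_point_lipschitz)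
  obtain L where L0: "0 \<le> L" and L: "\<And>s v w. s \<in> {0..T} \<Longrightarrow> norm v \<le> R \<Longrightarrow> norm w \<le> R \<Longrightarrow>
       norm (F (z s) v - F (z s) w) \<le> L * norm (v - w)"
    using loc_lipschitz_uniform_on_ball[OF lip zc] by blast
  obtain x where "solves_on T (\<lambda>s v. F (z s) (P v)) x0 \<sigma> x"
  proof (rule solves_on_exists_lipschitz[OF T _ _ _ \<sigma>c])
    show "0 < L + 1" using L0 by simp
    have "continuous_on UNIV P"
      unfolding P_def using R by (intro continuous_on_closest_point) auto
    then show "continuous_on {0..T} (\<lambda>s. F (z s) (P (y s)))" if "continuous_on {0..T} y" for y
      using continuous_on_compose_loc_lipschitz[OF lip zc continuous_on_compose2[OF _ that subset_UNIV]]
      by blast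
    fix s v w assume "s \<in> {0..T}"
    then have "norm (F (z s) (P v) - F (z s) (P w)) \<le> L * dist (P v) (P w)"
      using L[OF _ P(1) P(1)] by (simp add: dist_norm)
    also have "\<dots> \<le> (L + 1) * norm (v - w)"
      using P(2)[of v w] L0 by (simp add: dist_norm mult_mono)
    finally show "norm (F (z s) (P v) - F (z s) (P w)) \<le> (L + 1) * norm (v - w)" .
  qed
  then show ?thesis using that unfolding P_def by blast
qed

section \<open>A priori bound and global well-posedness\<close>

lemma solves_on_energy_bound:
  fixes F :: "'z::real_normed_vector \<Rightarrow> 'x::euclidean_space \<Rightarrow> 'x" and z :: "real \<Rightarrow> 'z"
  assumes lip: "loc_lipschitz (\<lambda>(z, x). F z x)"
    and growth: "\<And>z x. norm (F z x) \<le> c * (1 + norm x + norm z)" and c0: "0 \<le> c"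
    and \<kappa>: "0 < \<kappa>"
    and dissip: "\<And>z x y. inner (F z x - F z y) (x - y) \<le> D - \<kappa> * (norm (x - y))\<^sup>2"
    and x: "solves_on t (\<lambda>s v. F (z s) v) x0 \<sigma> x" and t: "0 \<le> t"
    and zc: "continuous_on {0..t} z" and \<sigma>c: "continuous_on {0..t} \<sigma>"
    and \<sigma>b: "\<And>s. s \<in> {0..t} \<Longrightarrow> norm (\<sigma> s) \<le> S\<sigma>" and zb: "\<And>s. s \<in> {0..t} \<Longrightarrow> norm (z s) \<le> Sz"
  shows "(norm (x t - \<sigma> t))\<^sup>2 \<le> (norm x0)\<^sup>2 + t * (2 * D + (c * (1 + S\<sigma> + Sz))\<^sup>2 / (2 * \<kappa>))"
proof -
  define h where "h s = 2 * D + (norm (F (z s) (\<sigma> s)))\<^sup>2 / (2 * \<kappa>)" for s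
  have xc: "continuous_on {0..t} x" using x by (simp add: solves_on_def)
  have hc: "continuous_on {0..t} h"
    unfolding h_def using \<kappa>
    by (intro continuous_intros continuous_on_compose_loc_lipschitz[OF lip zc \<sigma>c]) auto
  have shifted: "x s - \<sigma> s = x0 + integral {0..s} (\<lambda>r. F (z r) (x r))" if "s \<in> {0..t}" for s
    using x that by (simp add: solves_on_def)
  have "exp (0 * t) * (norm (x t - \<sigma> t))\<^sup>2
      \<le> (norm (x 0 - \<sigma> 0))\<^sup>2 + integral {0..t} (\<lambda>s. exp (0 * s) * h s)"
  proof (rule energy_estimate[OF continuous_on_compose_loc_lipschitz[OF lip zc xc] hc])
    fix s assume s: "s \<in> {0..t}"
    show "x s - \<sigma> s = (x 0 - \<sigma> 0) + integral {0..s} (\<lambda>r. F (z r) (x r))"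
      using shifted[OF s] shifted[of 0] t by simp
    have "2 * inner (F (z s) (x s)) (x s - \<sigma> s)
        \<le> 2 * D - (2 * \<kappa> - 2 * \<kappa>) * (norm (x s - \<sigma> s))\<^sup>2 + (norm (F (z s) (\<sigma> s)))\<^sup>2 / (2 * \<kappa>)"
      by (rule dissipative_inner_bound[OF dissip]) (use \<kappa> in simp)
    then show "2 * inner (F (z s) (x s)) (x s - \<sigma> s) + 0 * (norm (x s - \<sigma> s))\<^sup>2 \<le> h s"
      by (simp add: h_def)
  qed (use t in auto)
  moreover have "x 0 - \<sigma> 0 = x0" using shifted[of 0] t by simp
  moreover have "integral {0..t} h \<le> t * (2 * D + (c * (1 + S\<sigma> + Sz))\<^sup>2 / (2 * \<kappa>))"
  proof -
    have "h s \<le> 2 * D + (c * (1 + S\<sigma> + Sz))\<^sup>2 / (2 * \<kappa>)" if s: "s \<in> {0..t}" for s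
    proof -
      have "c * (1 + norm (\<sigma> s) + norm (z s)) \<le> c * (1 + S\<sigma> + Sz)"
        using \<sigma>b[OF s] zb[OF s] c0 by (intro mult_left_mono) auto
      then have "norm (F (z s) (\<sigma> s)) \<le> c * (1 + S\<sigma> + Sz)"
        using growth order_trans by blast
      then have "(norm (F (z s) (\<sigma> s)))\<^sup>2 \<le> (c * (1 + S\<sigma> + Sz))\<^sup>2"
        by (intro power_mono) auto
      then show ?thesis unfolding h_def using \<kappa> by (simp add: divide_right_mono)
    qed
    then have "integral {0..t} h \<le> integral {0..t} (\<lambda>s. 2 * D + (c * (1 + S\<sigma> + Sz))\<^sup>2 / (2 * \<kappa>))"
      by (intro integral_le integrable_continuous_real hc) auto
    then show ?thesis using t by simp
  qed
  ultimately show ?thesis by simp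
qed

definition apriori_constant :: "real \<Rightarrow> real \<Rightarrow> real \<Rightarrow> real \<Rightarrow> real" where
  "apriori_constant c \<kappa> D T = 1 + sqrt (2 * T * D) + c * sqrt (T / (2 * \<kappa>))"

lemma apriori_constant_ge_1: "0 \<le> c \<Longrightarrow> 0 < \<kappa> \<Longrightarrow> 0 \<le> D \<Longrightarrow> 0 \<le> T \<Longrightarrow> 1 \<le> apriori_constant c \<kappa> D T"
  unfolding apriori_constant_def by simp

lemma solves_on_norm_bound:
  fixes F :: "'z::real_normed_vector \<Rightarrow> 'x::euclidean_space \<Rightarrow> 'x" and z :: "real \<Rightarrow> 'z"
  assumes lip: "loc_lipschitz (\<lambda>(z, x). F z x)"
    and growth: "\<And>z x. norm (F z x) \<le> c * (1 + norm x + norm z)" and c0: "0 \<le> c"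
    and \<kappa>: "0 < \<kappa>" and D0: "0 \<le> D"
    and dissip: "\<And>z x y. inner (F z x - F z y) (x - y) \<le> D - \<kappa> * (norm (x - y))\<^sup>2"
    and x: "solves_on t (\<lambda>s v. F (z s) v) x0 \<sigma> x" and t: "0 \<le> t" "t \<le> T"
    and zc: "continuous_on {0..t} z" and \<sigma>c: "continuous_on {0..t} \<sigma>"
    and \<sigma>b: "\<And>s. s \<in> {0..t} \<Longrightarrow> norm (\<sigma> s) \<le> S\<sigma>" and zb: "\<And>s. s \<in> {0..t} \<Longrightarrow> norm (z s) \<le> Sz"
  shows "norm (x t) \<le> apriori_constant c \<kappa> D T * (1 + norm x0 + S\<sigma> + Sz)"
proof -
  define Q where "Q = 1 + S\<sigma> + Sz"
  define P where "P = 1 + norm x0 + S\<sigma> + Sz"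
  define A where "A = sqrt (2 * T * D)"
  define B where "B = c * sqrt (T / (2 * \<kappa>))"
  have S0: "0 \<le> S\<sigma>" "0 \<le> Sz"
    using \<sigma>b[of 0] zb[of 0] t by (auto intro: order_trans[OF norm_ge_zero])
  have A0: "0 \<le> A" and B0: "0 \<le> B" unfolding A_def B_def using t D0 \<kappa> c0 by auto
  have "(norm (x t - \<sigma> t))\<^sup>2 \<le> (norm x0)\<^sup>2 + t * (2 * D + (c * Q)\<^sup>2 / (2 * \<kappa>))"
    unfolding Q_def by (rule solves_on_energy_bound[OF lip growth c0 \<kappa> dissip x t(1) zc \<sigma>c \<sigma>b zb])
  also have "\<dots> \<le> (norm x0)\<^sup>2 + T * (2 * D + (c * Q)\<^sup>2 / (2 * \<kappa>))"
    using t D0 \<kappa> by (intro add_left_mono mult_right_mono) auto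
  also have "\<dots> = (norm x0)\<^sup>2 + 2 * T * D + (c * Q)\<^sup>2 * (T / (2 * \<kappa>))"
    by (simp add: algebra_simps)
  finally have "norm (x t - \<sigma> t) \<le> sqrt ((norm x0)\<^sup>2 + 2 * T * D + (c * Q)\<^sup>2 * (T / (2 * \<kappa>)))"
    by (simp add: real_le_rsqrt)
  also have "\<dots> \<le> sqrt ((norm x0)\<^sup>2) + sqrt (2 * T * D) + sqrt ((c * Q)\<^sup>2 * (T / (2 * \<kappa>)))"
    using t D0 \<kappa> sqrt_add_le_add_sqrt
    by (smt (verit) divide_nonneg_pos zero_le_mult_iff zero_le_power2)
  also have "\<dots> = norm x0 + A + B * Q"
    unfolding A_def B_def using c0 S0 by (subst real_sqrt_mult) (simp add: Q_def)
  finally have "norm (x t - \<sigma> t) \<le> norm x0 + A + B * Q" .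
  moreover have "norm (x t) \<le> norm (\<sigma> t) + norm (x t - \<sigma> t)"
    using norm_triangle_ineq[of "\<sigma> t" "x t - \<sigma> t"] by simp
  moreover have "norm (\<sigma> t) \<le> S\<sigma>" using \<sigma>b t by auto
  moreover have "A \<le> A * P" "B * Q \<le> B * P" "S\<sigma> + norm x0 \<le> P"
    unfolding P_def Q_def using A0 B0 S0 by (auto intro: mult_left_mono simp: mult_le_cancel_left1)
  ultimately have "norm (x t) \<le> (1 + A + B) * P" by (simp add: algebra_simps)
  then show ?thesis unfolding apriori_constant_def A_def B_def P_def .
qed

lemma continuous_on_norm_barrier:
  fixes x :: "real \<Rightarrow> 'a::real_normed_vector"
  assumes xc: "continuous_on {0..T} x" and x0: "norm (x 0) \<le> R"
    and step: "\<And>\<tau>. \<tau> \<in> {0..T} \<Longrightarrow> \<forall>s\<in>{0..\<tau>}. norm (x s) \<le> R \<Longrightarrow> norm (x \<tau>) < R"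
  shows "\<forall>t\<in>{0..T}. norm (x t) < R"
proof (rule ccontr)
  assume exit: "\<not> ?thesis"
  define S where "S = {0..T} \<inter> (\<lambda>t. norm (x t)) -` {R..}"
  have "S \<noteq> {}" using exit unfolding S_def by force
  moreover have "bdd_below S" unfolding S_def by (rule bdd_belowI[of _ 0]) auto
  moreover have "closed S" unfolding S_def
    by (intro continuous_closed_preimage continuous_intros xc)
  ultimately have \<tau>S: "Inf S \<in> S" by (rule closed_contains_Inf)
  define \<tau> where "\<tau> = Inf S"
  have below: "norm (x s) < R" if "s \<in> {0..<\<tau>}" for s
  proof (rule ccontr)
    assume "\<not> norm (x s) < R"
    then have "s \<in> S" using that \<tau>S unfolding S_def \<tau>_def by auto
    then have "\<tau> \<le> s" unfolding \<tau>_def using \<open>bdd_below S\<close> by (rule cInf_lower)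
    then show False using that by simp
  qed
  have "\<forall>s\<in>{0..\<tau>}. norm (x s) \<le> R"
  proof -
    define A where "A = {0..\<tau>} \<inter> (\<lambda>t. norm (x t)) -` {..R}"
    have "closed A" unfolding A_def using \<tau>S unfolding S_def \<tau>_def
      by (intro continuous_closed_preimage continuous_intros continuous_on_subset[OF xc]) auto
    moreover have "{0..<\<tau>} \<subseteq> A" unfolding A_def using below by fastforce
    ultimately have "closure {0..<\<tau>} \<subseteq> A" by (rule closure_minimal[rotated])
    moreover have "0 \<in> A" unfolding A_def using x0 \<tau>S unfolding S_def \<tau>_def by auto
    ultimately have "{0..\<tau>} \<subseteq> A"
      by (cases "\<tau> = 0") auto
    then show ?thesis unfolding A_def by auto
  qed
  with step have "norm (x \<tau>) < R" using \<tau>S unfolding S_def \<tau>_def by auto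
  then show False using \<tau>S unfolding S_def \<tau>_def by auto
qed

lemma solves_on_exists:
  fixes F :: "'z::real_normed_vector \<Rightarrow> 'x::euclidean_space \<Rightarrow> 'x" and z :: "real \<Rightarrow> 'z"
  assumes lip: "loc_lipschitz (\<lambda>(z, x). F z x)"
    and growth: "\<And>z x. norm (F z x) \<le> c * (1 + norm x + norm z)" and c0: "0 \<le> c"
    and \<kappa>: "0 < \<kappa>" and D0: "0 \<le> D"
    and dissip: "\<And>z x y. inner (F z x - F z y) (x - y) \<le> D - \<kappa> * (norm (x - y))\<^sup>2"
    and T: "0 \<le> T" and zc: "continuous_on {0..T} z" and \<sigma>c: "continuous_on {0..T} \<sigma>"
  obtains x where "solves_on T (\<lambda>s v. F (z s) v) x0 \<sigma> x"
proof -
  \<comment> \<open>The truncation radius exceeds the a priori bound B, so the solution of the truncated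
    equation never reaches the boundary of the ball, where the truncation would become active.\<close>
  define B where "B = apriori_constant c \<kappa> D T * (1 + norm x0 + sup_norm T \<sigma> + sup_norm T z)"
  define R where "R = B + 1"
  have S0: "0 \<le> sup_norm T \<sigma>" "0 \<le> sup_norm T z"
    using sup_norm_nonneg[OF \<sigma>c T] sup_norm_nonneg[OF zc T] .
  have x0B: "norm x0 + sup_norm T \<sigma> \<le> B"
  proof -
    have "norm x0 + sup_norm T \<sigma> \<le> 1 * (1 + norm x0 + sup_norm T \<sigma> + sup_norm T z)"
      using S0 by simp
    also have "\<dots> \<le> B"
      unfolding B_def using apriori_constant_ge_1[OF c0 \<kappa> D0 T] S0
      by (intro mult_right_mono) auto
    finally show ?thesis .
  qed
  then have R0: "0 < R" unfolding R_def using S0 by (smt (verit) norm_ge_zero)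
  obtain x where x: "solves_on T (\<lambda>s v. F (z s) (closest_point (cball 0 R) v)) x0 \<sigma> x"
    using solves_on_exists_truncated[OF lip R0 T zc \<sigma>c] by blast
  have untruncated: "solves_on \<tau> (\<lambda>s v. F (z s) v) x0 \<sigma> x"
    if "\<tau> \<le> T" and \<tau>: "\<forall>s\<in>{0..\<tau>}. norm (x s) \<le> R" for \<tau>
  proof -
    have "closest_point (cball 0 R) (x s) = x s" if "s \<in> {0..\<tau>}" for s
      by (rule closest_point_self) (use that \<tau> in auto)
    with solves_on_subset[OF x that(1)] show ?thesis
      by (subst solves_on_cong[where G' = "\<lambda>s v. F (z s) (closest_point (cball 0 R) v)"]) auto
  qed
  have "\<forall>t\<in>{0..T}. norm (x t) < R"
  proof (rule continuous_on_norm_barrier)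
    show "continuous_on {0..T} x" using x by (simp add: solves_on_def)
    have "x 0 = x0 + \<sigma> 0" using x T by (simp add: solves_on_def)
    then show "norm (x 0) \<le> R"
      using norm_triangle_ineq[of x0 "\<sigma> 0"] sup_norm_upper[OF \<sigma>c, of 0] x0B T
      unfolding R_def by simp
    fix \<tau> assume \<tau>: "\<tau> \<in> {0..T}" "\<forall>s\<in>{0..\<tau>}. norm (x s) \<le> R"
    have "norm (x \<tau>) \<le> B"
      unfolding B_def
    proof (rule solves_on_norm_bound[OF lip growth c0 \<kappa> D0 dissip untruncated])
      show "continuous_on {0..\<tau>} z" "continuous_on {0..\<tau>} \<sigma>"
        using \<tau> by (auto intro: continuous_on_subset[OF zc] continuous_on_subset[OF \<sigma>c])
      show "norm (\<sigma> s) \<le> sup_norm T \<sigma>" "norm (z s) \<le> sup_norm T z" if "s \<in> {0..\<tau>}" for s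
        using that \<tau> by (auto intro!: sup_norm_upper \<sigma>c zc)
    qed (use \<tau> in auto)
    then show "norm (x \<tau>) < R" unfolding R_def by simp
  qed
  then have "solves_on T (\<lambda>s v. F (z s) v) x0 \<sigma> x"
    by (intro untruncated) (auto simp: less_imp_le)
  then show ?thesis by (rule that)
qed

lemma global_solution_of_solves_on:
  fixes G :: "real \<Rightarrow> 'x::euclidean_space \<Rightarrow> 'x"
  assumes sol: "\<And>T. solves_on T G x0 \<sigma> x" and Gc: "\<And>T. continuous_on {0..T} (\<lambda>s. G s (x s))"
  shows "is_global_solution G x0 \<sigma> x"
  unfolding is_global_solution_def
proof (intro conjI allI impI)
  show "continuous_on {0..} x"
    unfolding continuous_on_eq_continuous_within
  proof
    fix t :: real assume "t \<in> {0..}"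
    then have "continuous (at t within {0..t + 1}) x"
      using sol[of "t + 1"] by (auto simp: solves_on_def continuous_on_eq_continuous_within)
    moreover have "at t within {0..} = at t within {0..t + 1}"
      by (rule at_within_nhd[where S="{..<t + 1}"]) auto
    ultimately show "continuous (at t within {0..}) x" by simp
  qed
  fix t :: real assume "0 \<le> t"
  show "(\<lambda>s. G s (x s)) integrable_on {0..t}"
    using Gc by (rule integrable_continuous_real)
  show "x t = x0 + integral {0..t} (\<lambda>s. G s (x s)) + \<sigma> t"
    using sol[of t] \<open>0 \<le> t\<close> by (simp add: solves_on_def)
qed

lemma global_solution_exists_unique:
  fixes F :: "'z::real_normed_vector \<Rightarrow> 'x::euclidean_space \<Rightarrow> 'x" and z :: "real \<Rightarrow> 'z"
  assumes lip: "loc_lipschitz (\<lambda>(z, x). F z x)" and zc: "continuous_on {0..} z"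
    and local_solution: "\<And>T. 0 \<le> T \<Longrightarrow> \<exists>x. solves_on T (\<lambda>s v. F (z s) v) x0 \<sigma> x"
  shows "\<exists>x. is_global_solution (\<lambda>s v. F (z s) v) x0 \<sigma> x \<and>
    (\<forall>x'. is_global_solution (\<lambda>s v. F (z s) v) x0 \<sigma> x' \<longrightarrow> (\<forall>t\<ge>0. x' t = x t))"
proof -
  have zc': "continuous_on {0..T} z" for T by (rule continuous_on_subset[OF zc]) auto
  have "\<forall>n::nat. \<exists>x. solves_on (real n) (\<lambda>s v. F (z s) v) x0 \<sigma> x"
    using local_solution by simp
  then obtain X where X: "\<And>n::nat. solves_on (real n) (\<lambda>s v. F (z s) v) x0 \<sigma> (X n)"
    by metis
  define x where "x t = X (nat \<lceil>t\<rceil>) t" for t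
  have x_eq: "x t = X n t" if "0 \<le> t" "t \<le> real n" for n t
    unfolding x_def
    using solves_on_unique[OF lip zc' solves_on_subset[OF X real_nat_ceiling_ge] solves_on_subset[OF X that(2)]]
      that(1) by simp
  have x_solves: "solves_on T (\<lambda>s v. F (z s) v) x0 \<sigma> x" for T
  proof -
    define n where "n = nat \<lceil>T\<rceil>"
    have agree: "x s = X n s" if "s \<in> {0..real n}" for s
      using x_eq that by simp
    have "solves_on (real n) (\<lambda>s v. F (z s) v) x0 \<sigma> x"
      unfolding solves_on_def
    proof (intro conjI ballI)
      show "continuous_on {0..real n} x"
        using X[of n] agree by (auto simp: solves_on_def intro: continuous_on_eq)
      fix t assume t: "t \<in> {0..real n}"
      have "integral {0..t} (\<lambda>s. F (z s) (x s)) = integral {0..t} (\<lambda>s. F (z s) (X n s))"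
        using t agree by (intro integral_cong) auto
      then show "x t = x0 + integral {0..t} (\<lambda>s. F (z s) (x s)) + \<sigma> t"
        using X[of n] t agree[OF t] by (simp add: solves_on_def)
    qed
    then show ?thesis unfolding n_def using real_nat_ceiling_ge by (rule solves_on_subset)
  qed
  have "is_global_solution (\<lambda>s v. F (z s) v) x0 \<sigma> x"
  proof (rule global_solution_of_solves_on[OF x_solves])
    show "continuous_on {0..T} (\<lambda>s. F (z s) (x s))" for T
      using x_solves[of T] by (intro continuous_on_compose_loc_lipschitz[OF lip zc']) (simp add: solves_on_def)
  qed
  then show ?thesis
    using solves_on_unique[OF lip zc' global_solution_solves_on global_solution_solves_on] by fastforce
qed

lemma global_well_posedness:
  fixes F :: "'z::real_normed_vector \<Rightarrow> 'x::euclidean_space \<Rightarrow> 'x" and z :: "real \<Rightarrow> 'z"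
  assumes lip: "loc_lipschitz (\<lambda>(z, x). F z x)"
    and growth: "\<And>z x. norm (F z x) \<le> c * (1 + norm x + norm z)" and c0: "0 \<le> c"
    and \<kappa>: "0 < \<kappa>" and D0: "0 \<le> D"
    and dissip: "\<And>z x y. inner (F z x - F z y) (x - y) \<le> D - \<kappa> * (norm (x - y))\<^sup>2"
    and zc: "continuous_on {0..} z" and \<sigma>c: "continuous_on {0..} \<sigma>"
  shows "\<exists>x. is_global_solution (\<lambda>s v. F (z s) v) x0 \<sigma> x \<and>
    (\<forall>x'. is_global_solution (\<lambda>s v. F (z s) v) x0 \<sigma> x' \<longrightarrow> (\<forall>t\<ge>0. x' t = x t))"
proof (rule global_solution_exists_unique[OF lip zc])
  fix T :: real assume "0 \<le> T"
  moreover have "continuous_on {0..T} z" "continuous_on {0..T} \<sigma>"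
    by (auto intro: continuous_on_subset[OF zc] continuous_on_subset[OF \<sigma>c])
  ultimately show "\<exists>x. solves_on T (\<lambda>s v. F (z s) v) x0 \<sigma> x"
    using solves_on_exists[OF lip growth c0 \<kappa> D0 dissip] by metis
qed

lemma sup_norm_solution_bound:
  fixes F :: "'z::real_normed_vector \<Rightarrow> 'x::euclidean_space \<Rightarrow> 'x" and z :: "real \<Rightarrow> 'z"
  assumes lip: "loc_lipschitz (\<lambda>(z, x). F z x)"
    and growth: "\<And>z x. norm (F z x) \<le> c * (1 + norm x + norm z)" and c0: "0 \<le> c"
    and \<kappa>: "0 < \<kappa>" and D0: "0 \<le> D"
    and dissip: "\<And>z x y. inner (F z x - F z y) (x - y) \<le> D - \<kappa> * (norm (x - y))\<^sup>2"
    and T: "0 \<le> T" and zc: "continuous_on {0..T} z" and \<sigma>c: "continuous_on {0..T} \<sigma>"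
    and x: "solves_on T (\<lambda>s v. F (z s) v) x0 \<sigma> x"
  shows "sup_norm T x \<le> apriori_constant c \<kappa> D T * (1 + norm x0 + sup_norm T \<sigma> + sup_norm T z)"
proof (rule sup_norm_least[OF T])
  fix t assume t: "t \<in> {0..T}"
  show "norm (x t) \<le> apriori_constant c \<kappa> D T * (1 + norm x0 + sup_norm T \<sigma> + sup_norm T z)"
  proof (rule solves_on_norm_bound[OF lip growth c0 \<kappa> D0 dissip solves_on_subset[OF x]])
    show "continuous_on {0..t} z" "continuous_on {0..t} \<sigma>"
      using t by (auto intro: continuous_on_subset[OF zc] continuous_on_subset[OF \<sigma>c])
    show "norm (\<sigma> s) \<le> sup_norm T \<sigma>" "norm (z s) \<le> sup_norm T z" if "s \<in> {0..t}" for s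
      using that t by (auto intro!: sup_norm_upper \<sigma>c zc)
  qed (use t in auto)
qed

lemma solves_on_comparison:
  fixes F :: "'z::real_normed_vector \<Rightarrow> 'x::euclidean_space \<Rightarrow> 'x" and z :: "real \<Rightarrow> 'z"
  assumes lip: "loc_lipschitz (\<lambda>(z, x). F z x)"
    and growth: "\<And>z x. norm (F z x) \<le> c * (1 + norm x + norm z)"
    and \<kappa>: "0 < \<kappa>" and D0: "0 \<le> D"
    and dissip: "\<And>z x y. inner (F z x - F z y) (x - y) \<le> D - \<kappa> * (norm (x - y))\<^sup>2"
    and zc: "continuous_on {0..T} z"
    and x: "solves_on T (\<lambda>s v. F (z s) v) x0 \<sigma> x" and y: "solves_on T (\<lambda>s v. - v) x0 \<sigma> y"
    and t: "t \<in> {0..T}"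
  shows "(norm (x t - y t))\<^sup>2 \<le> (2 * D + (c + 1)\<^sup>2 / \<kappa>) *
    integral {0..t} (\<lambda>s. exp (- \<kappa> * (t - s)) * (1 + norm (y s) + norm (z s))\<^sup>2)"
proof -
  define h where "h s = 2 * D + (norm (F (z s) (y s) + y s))\<^sup>2 / \<kappa>" for s
  define Q where "Q s = 1 + norm (y s) + norm (z s)" for s
  have xc: "continuous_on {0..T} x" and yc: "continuous_on {0..T} y"
    using x y by (simp_all add: solves_on_def)
  have Fx: "continuous_on {0..T} (\<lambda>s. F (z s) (x s))" and Fy: "continuous_on {0..T} (\<lambda>s. F (z s) (y s))"
    using continuous_on_compose_loc_lipschitz[OF lip zc] xc yc by auto
  have hc: "continuous_on {0..T} h" unfolding h_def using \<kappa> by (intro continuous_intros Fy yc) auto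
  have Qc: "continuous_on {0..T} Q" unfolding Q_def by (intro continuous_intros yc zc)
  have kernel: "continuous_on {0..T} (\<lambda>s. exp (- \<kappa> * (t - s)))" by (intro continuous_intros)
  have sub: "{0..t} \<subseteq> {0..T}" using t by simp
  have diff: "x s - y s = integral {0..s} (\<lambda>r. F (z r) (x r) + y r)" if "s \<in> {0..T}" for s
    using solves_on_diff[OF x y Fx _ that] yc by (simp add: continuous_on_minus)
  have "exp (\<kappa> * t) * (norm (x t - y t))\<^sup>2
      \<le> (norm (x 0 - y 0))\<^sup>2 + integral {0..t} (\<lambda>s. exp (\<kappa> * s) * h s)"
  proof (rule energy_estimate[OF _ hc _ _ t])
    show "continuous_on {0..T} (\<lambda>s. F (z s) (x s) + y s)" by (intro continuous_intros Fx yc)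
    fix s assume s: "s \<in> {0..T}"
    show "x s - y s = (x 0 - y 0) + integral {0..s} (\<lambda>r. F (z r) (x r) + y r)"
      using diff[OF s] diff[of 0] s by simp
    have "inner ((F (z s) (x s) + y s) - (F (z s) (y s) + y s)) (x s - y s)
        \<le> D - \<kappa> * (norm (x s - y s))\<^sup>2"
      using dissip by simp
    then have "2 * inner (F (z s) (x s) + y s) (x s - y s)
        \<le> 2 * D - (2 * \<kappa> - \<kappa>) * (norm (x s - y s))\<^sup>2 + (norm (F (z s) (y s) + y s))\<^sup>2 / \<kappa>"
      using \<kappa> by (rule dissipative_inner_bound)
    then show "2 * inner (F (z s) (x s) + y s) (x s - y s) + \<kappa> * (norm (x s - y s))\<^sup>2 \<le> h s"
      unfolding h_def by simp
  qed
  moreover have "x 0 - y 0 = 0" using diff[of 0] t by simp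
  ultimately have "exp (\<kappa> * t) * (norm (x t - y t))\<^sup>2 \<le> integral {0..t} (\<lambda>s. exp (\<kappa> * s) * h s)"
    by simp
  then have "(norm (x t - y t))\<^sup>2 \<le> exp (- \<kappa> * t) * integral {0..t} (\<lambda>s. exp (\<kappa> * s) * h s)"
    by (simp add: exp_minus field_simps)
  also have "\<dots> = integral {0..t} (\<lambda>s. exp (- \<kappa> * (t - s)) * h s)"
    by (rule integral_exp_kernel)
  also have "\<dots> \<le> integral {0..t} (\<lambda>s. (2 * D + (c + 1)\<^sup>2 / \<kappa>) * (exp (- \<kappa> * (t - s)) * (Q s)\<^sup>2))"
  proof (rule integral_le)
    show "(\<lambda>s. exp (- \<kappa> * (t - s)) * h s) integrable_on {0..t}"
      by (intro integrable_continuous_real continuous_on_subset[OF _ sub] continuous_on_mult kernel hc)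
    show "(\<lambda>s. (2 * D + (c + 1)\<^sup>2 / \<kappa>) * (exp (- \<kappa> * (t - s)) * (Q s)\<^sup>2)) integrable_on {0..t}"
      by (intro integrable_continuous_real continuous_on_subset[OF _ sub] continuous_on_mult
          continuous_on_const kernel continuous_on_power Qc)
    fix s
    have "h s \<le> (2 * D + (c + 1)\<^sup>2 / \<kappa>) * (Q s)\<^sup>2"
      unfolding h_def Q_def by (rule linear_growth_forcing_bound[OF growth \<kappa> D0])
    then show "exp (- \<kappa> * (t - s)) * h s \<le> (2 * D + (c + 1)\<^sup>2 / \<kappa>) * (exp (- \<kappa> * (t - s)) * (Q s)\<^sup>2)"
      by (metis exp_ge_zero mult.left_commute mult_left_mono)
  qed
  finally show ?thesis unfolding Q_def by (simp only: integral_mult_right)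
qed

lemma finite_horizon_estimates:
  fixes F :: "'z::real_normed_vector \<Rightarrow> 'x::euclidean_space \<Rightarrow> 'x"
  assumes lip: "loc_lipschitz (\<lambda>(z, x). F z x)"
    and growth: "\<And>z x. norm (F z x) \<le> c * (1 + norm x + norm z)" and c0: "0 \<le> c"
    and \<kappa>: "0 < \<kappa>" and D0: "0 \<le> D"
    and dissip: "\<And>z x y. inner (F z x - F z y) (x - y) \<le> D - \<kappa> * (norm (x - y))\<^sup>2"
    and T: "0 < T"
  shows "\<exists>C. \<forall>(x0::'x) (\<sigma>::real \<Rightarrow> 'x) (z::real \<Rightarrow> 'z) x y.
    continuous_on {0..} \<sigma> \<and> \<sigma> 0 = 0 \<and> continuous_on {0..} z \<and>
    is_global_solution (\<lambda>s v. F (z s) v) x0 \<sigma> x \<and> is_global_solution (\<lambda>s v. - v) x0 \<sigma> y \<longrightarrow>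
    (\<forall>t\<in>{0..T}. (norm (x t - y t))\<^sup>2 \<le>
        C * integral {0..t} (\<lambda>s. exp (- \<kappa> * (t - s)) * (1 + norm (y s) + norm (z s))\<^sup>2)) \<and>
    sup_norm T x \<le> C * (1 + norm x0 + sup_norm T \<sigma> + sup_norm T z)"
proof (intro exI[of _ "max (apriori_constant c \<kappa> D T) (2 * D + (c + 1)\<^sup>2 / \<kappa>)"] allI impI conjI ballI)
  fix x0 :: 'x and \<sigma> x y :: "real \<Rightarrow> 'x" and z :: "real \<Rightarrow> 'z"
  assume "continuous_on {0..} \<sigma> \<and> \<sigma> 0 = 0 \<and> continuous_on {0..} z \<and>
    is_global_solution (\<lambda>s v. F (z s) v) x0 \<sigma> x \<and> is_global_solution (\<lambda>s v. - v) x0 \<sigma> y"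
  then have \<sigma>c: "continuous_on {0..T} \<sigma>" and zc: "continuous_on {0..T} z"
    and x: "solves_on T (\<lambda>s v. F (z s) v) x0 \<sigma> x" and y: "solves_on T (\<lambda>s v. - v) x0 \<sigma> y"
    by (auto intro: continuous_on_subset global_solution_solves_on)
  fix t assume t: "t \<in> {0..T}"
  have "0 \<le> integral {0..t} (\<lambda>s. exp (- \<kappa> * (t - s)) * (1 + norm (y s) + norm (z s))\<^sup>2)"
    using t y zc unfolding solves_on_def
    by (intro integral_nonneg integrable_continuous_real continuous_intros)
      (auto intro: continuous_on_subset)
  then show "(norm (x t - y t))\<^sup>2 \<le> max (apriori_constant c \<kappa> D T) (2 * D + (c + 1)\<^sup>2 / \<kappa>) *
      integral {0..t} (\<lambda>s. exp (- \<kappa> * (t - s)) * (1 + norm (y s) + norm (z s))\<^sup>2)"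
    by (rule order_trans[OF solves_on_comparison[OF lip growth \<kappa> D0 dissip zc x y t]
          mult_right_mono[OF max.cobounded2]])
next
  fix x0 :: 'x and \<sigma> x y :: "real \<Rightarrow> 'x" and z :: "real \<Rightarrow> 'z"
  assume "continuous_on {0..} \<sigma> \<and> \<sigma> 0 = 0 \<and> continuous_on {0..} z \<and>
    is_global_solution (\<lambda>s v. F (z s) v) x0 \<sigma> x \<and> is_global_solution (\<lambda>s v. - v) x0 \<sigma> y"
  then have \<sigma>c: "continuous_on {0..T} \<sigma>" and zc: "continuous_on {0..T} z"
    and x: "solves_on T (\<lambda>s v. F (z s) v) x0 \<sigma> x"
    by (auto intro: continuous_on_subset global_solution_solves_on)
  have "0 \<le> 1 + norm x0 + sup_norm T \<sigma> + sup_norm T z"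
    using sup_norm_nonneg[OF \<sigma>c] sup_norm_nonneg[OF zc] T by simp
  then show "sup_norm T x \<le> max (apriori_constant c \<kappa> D T) (2 * D + (c + 1)\<^sup>2 / \<kappa>) *
      (1 + norm x0 + sup_norm T \<sigma> + sup_norm T z)"
    using sup_norm_solution_bound[OF lip growth c0 \<kappa> D0 dissip _ zc \<sigma>c x] T
      mult_right_mono[OF max.cobounded1] by (meson less_imp_le order_trans)
qed

section \<open>Hoelder regularity\<close>

lemma hoelder_lipschitz_perturbation:
  fixes x \<sigma> :: "real \<Rightarrow> 'a::real_normed_vector"
  assumes T: "0 < T" and \<alpha>: "0 < \<alpha>" "\<alpha> \<le> 1" and M: "0 \<le> M" and \<sigma>: "hoelder_on \<alpha> T \<sigma>"
    and incr: "\<And>s t. s \<in> {0..T} \<Longrightarrow> t \<in> {0..T} \<Longrightarrow> norm (x t - x s) \<le> M * \<bar>t - s\<bar> + norm (\<sigma> t - \<sigma> s)"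
  shows "hoelder_on \<alpha> T x" and "hoelder_seminorm \<alpha> T x \<le> M * T powr (1 - \<alpha>) + hoelder_seminorm \<alpha> T \<sigma>"
proof -
  have incr': "norm (x t - x s) \<le> M * T powr (1 - \<alpha>) * \<bar>t - s\<bar> powr \<alpha> + norm (\<sigma> t - \<sigma> s)"
    if st: "s \<in> {0..T}" "t \<in> {0..T}" for s t
  proof -
    have "\<bar>t - s\<bar> = \<bar>t - s\<bar> powr (1 - \<alpha>) * \<bar>t - s\<bar> powr \<alpha>"
      by (simp flip: powr_add)
    also have "\<dots> \<le> T powr (1 - \<alpha>) * \<bar>t - s\<bar> powr \<alpha>"
      using st \<alpha> by (intro mult_right_mono powr_mono2) auto
    finally show ?thesis using incr[OF st] M by (smt (verit) mult.assoc mult_left_mono)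
  qed
  obtain C\<sigma> where C\<sigma>: "\<forall>s\<in>{0..T}. \<forall>t\<in>{0..T}. norm (\<sigma> t - \<sigma> s) \<le> C\<sigma> * \<bar>t - s\<bar> powr \<alpha>"
    using \<sigma> unfolding hoelder_on_def by blast
  show "hoelder_on \<alpha> T x"
    unfolding hoelder_on_def
  proof (intro exI[of _ "M * T powr (1 - \<alpha>) + C\<sigma>"] ballI)
    fix s t assume st: "s \<in> {0..T}" "t \<in> {0..T}"
    have "norm (\<sigma> t - \<sigma> s) \<le> C\<sigma> * \<bar>t - s\<bar> powr \<alpha>" using C\<sigma> st by blast
    then show "norm (x t - x s) \<le> (M * T powr (1 - \<alpha>) + C\<sigma>) * \<bar>t - s\<bar> powr \<alpha>"
      using incr'[OF st] unfolding distrib_right by linarith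
  qed
  show "hoelder_seminorm \<alpha> T x \<le> M * T powr (1 - \<alpha>) + hoelder_seminorm \<alpha> T \<sigma>"
  proof (rule hoelder_seminorm_least[OF T])
    fix s t assume st: "s \<in> {0..T}" "t \<in> {0..T}" "s \<noteq> t"
    then have p: "0 < \<bar>t - s\<bar> powr \<alpha>" by simp
    have "norm (x t - x s) / \<bar>t - s\<bar> powr \<alpha>
        \<le> (M * T powr (1 - \<alpha>) * \<bar>t - s\<bar> powr \<alpha> + norm (\<sigma> t - \<sigma> s)) / \<bar>t - s\<bar> powr \<alpha>"
      using incr'[OF st(1,2)] p by (intro divide_right_mono) auto
    also have "\<dots> = M * T powr (1 - \<alpha>) + norm (\<sigma> t - \<sigma> s) / \<bar>t - s\<bar> powr \<alpha>"
      using p by (simp add: add_divide_distrib)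
    also have "\<dots> \<le> M * T powr (1 - \<alpha>) + hoelder_seminorm \<alpha> T \<sigma>"
      using hoelder_seminorm_upper[OF \<sigma> st] by simp
    finally show "norm (x t - x s) / \<bar>t - s\<bar> powr \<alpha> \<le> M * T powr (1 - \<alpha>) + hoelder_seminorm \<alpha> T \<sigma>" .
  qed
qed

lemma solves_on_hoelder_bound:
  fixes F :: "'z::real_normed_vector \<Rightarrow> 'x::euclidean_space \<Rightarrow> 'x" and z :: "real \<Rightarrow> 'z"
  assumes lip: "loc_lipschitz (\<lambda>(z, x). F z x)"
    and growth: "\<And>z x. norm (F z x) \<le> c * (1 + norm x + norm z)" and c0: "0 \<le> c"
    and \<kappa>: "0 < \<kappa>" and D0: "0 \<le> D"
    and dissip: "\<And>z x y. inner (F z x - F z y) (x - y) \<le> D - \<kappa> * (norm (x - y))\<^sup>2"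
    and T: "0 < T" and \<alpha>: "0 < \<alpha>" "\<alpha> \<le> 1"
    and zc: "continuous_on {0..T} z" and \<sigma>c: "continuous_on {0..T} \<sigma>" and \<sigma>h: "hoelder_on \<alpha> T \<sigma>"
    and x: "solves_on T (\<lambda>s v. F (z s) v) x0 \<sigma> x"
  shows "hoelder_on \<alpha> T x \<and>
    hoelder_norm \<alpha> T x \<le> (apriori_constant c \<kappa> D T + c * (1 + apriori_constant c \<kappa> D T) * T powr (1 - \<alpha>) + 1)
      * (1 + norm x0 + sup_norm T z + hoelder_norm \<alpha> T \<sigma>)"
proof -
  define C1 where "C1 = apriori_constant c \<kappa> D T"
  define Q where "Q = 1 + norm x0 + sup_norm T z + hoelder_norm \<alpha> T \<sigma>"
  define M where "M = c * (1 + sup_norm T x + sup_norm T z)"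
  have xc: "continuous_on {0..T} x" using x by (simp add: solves_on_def)
  have nonneg: "0 \<le> sup_norm T \<sigma>" "0 \<le> sup_norm T z" "0 \<le> sup_norm T x" "0 \<le> hoelder_seminorm \<alpha> T \<sigma>"
    using T sup_norm_nonneg[OF \<sigma>c] sup_norm_nonneg[OF zc] sup_norm_nonneg[OF xc]
      hoelder_seminorm_nonneg[OF \<sigma>h] by auto
  have C1: "1 \<le> C1" unfolding C1_def using c0 \<kappa> D0 T by (intro apriori_constant_ge_1) auto
  have "sup_norm T x \<le> C1 * (1 + norm x0 + sup_norm T \<sigma> + sup_norm T z)"
    unfolding C1_def using T by (intro sup_norm_solution_bound[OF lip growth c0 \<kappa> D0 dissip _ zc \<sigma>c x]) simp
  also have "\<dots> \<le> C1 * Q"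
    unfolding Q_def hoelder_norm_def using C1 nonneg by (intro mult_left_mono) auto
  finally have Sx: "sup_norm T x \<le> C1 * Q" .
  have M0: "0 \<le> M" unfolding M_def using c0 nonneg by simp
  have "1 + sup_norm T z \<le> Q"
    using nonneg unfolding Q_def hoelder_norm_def by simp
  then have "1 + sup_norm T x + sup_norm T z \<le> (1 + C1) * Q"
    using Sx by (simp add: distrib_right)
  then have MQ: "M \<le> c * (1 + C1) * Q"
    unfolding M_def using c0 by (simp add: mult.assoc mult_left_mono)
  have "norm (F (z s) (x s)) \<le> M" if "s \<in> {0..T}" for s
    using growth[of "z s" "x s"] sup_norm_upper[OF xc that] sup_norm_upper[OF zc that] c0
    unfolding M_def by (smt (verit) mult_left_mono)
  then have incr: "norm (x t - x s) \<le> M * \<bar>t - s\<bar> + norm (\<sigma> t - \<sigma> s)"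
    if "s \<in> {0..T}" "t \<in> {0..T}" for s t
    using solves_on_increment_bound[OF x continuous_on_compose_loc_lipschitz[OF lip zc xc]] that
    by blast
  note hoelder = hoelder_lipschitz_perturbation[OF T \<alpha> M0 \<sigma>h incr]
  have "hoelder_norm \<alpha> T x = sup_norm T x + hoelder_seminorm \<alpha> T x"
    unfolding hoelder_norm_def ..
  also have "\<dots> \<le> C1 * Q + (c * (1 + C1) * Q * T powr (1 - \<alpha>) + Q)"
  proof (intro add_mono Sx)
    have "M * T powr (1 - \<alpha>) \<le> c * (1 + C1) * Q * T powr (1 - \<alpha>)"
      using MQ by (rule mult_right_mono) simp
    moreover have "hoelder_seminorm \<alpha> T \<sigma> \<le> Q"
      unfolding Q_def hoelder_norm_def using nonneg by simp
    ultimately show "hoelder_seminorm \<alpha> T x \<le> c * (1 + C1) * Q * T powr (1 - \<alpha>) + Q"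
      using hoelder(2) by linarith
  qed
  also have "\<dots> = (C1 + c * (1 + C1) * T powr (1 - \<alpha>) + 1) * Q"
    by (simp add: algebra_simps)
  finally show ?thesis using hoelder(1) unfolding C1_def Q_def by simp
qed

lemma hoelder_estimates:
  fixes F :: "'z::real_normed_vector \<Rightarrow> 'x::euclidean_space \<Rightarrow> 'x"
  assumes lip: "loc_lipschitz (\<lambda>(z, x). F z x)"
    and growth: "\<And>z x. norm (F z x) \<le> c * (1 + norm x + norm z)" and c0: "0 \<le> c"
    and \<kappa>: "0 < \<kappa>" and D0: "0 \<le> D"
    and dissip: "\<And>z x y. inner (F z x - F z y) (x - y) \<le> D - \<kappa> * (norm (x - y))\<^sup>2"
    and T: "0 < T" and \<alpha>: "0 < \<alpha>" "\<alpha> \<le> 1"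
  shows "\<exists>C. \<forall>(x0::'x) (\<sigma>::real \<Rightarrow> 'x) (z::real \<Rightarrow> 'z) x.
    continuous_on {0..} \<sigma> \<and> \<sigma> 0 = 0 \<and> continuous_on {0..} z \<and> hoelder_on \<alpha> T \<sigma> \<and>
    is_global_solution (\<lambda>s v. F (z s) v) x0 \<sigma> x \<longrightarrow>
    hoelder_on \<alpha> T x \<and> hoelder_norm \<alpha> T x \<le> C * (1 + norm x0 + sup_norm T z + hoelder_norm \<alpha> T \<sigma>)"
proof (intro exI allI impI)
  fix x0 :: 'x and \<sigma> x :: "real \<Rightarrow> 'x" and z :: "real \<Rightarrow> 'z"
  assume "continuous_on {0..} \<sigma> \<and> \<sigma> 0 = 0 \<and> continuous_on {0..} z \<and> hoelder_on \<alpha> T \<sigma> \<and>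
    is_global_solution (\<lambda>s v. F (z s) v) x0 \<sigma> x"
  then have "continuous_on {0..T} z" "continuous_on {0..T} \<sigma>" "hoelder_on \<alpha> T \<sigma>"
    and "solves_on T (\<lambda>s v. F (z s) v) x0 \<sigma> x"
    by (auto intro: continuous_on_subset global_solution_solves_on)
  from solves_on_hoelder_bound[OF lip growth c0 \<kappa> D0 dissip T \<alpha> this]
  show "hoelder_on \<alpha> T x \<and> hoelder_norm \<alpha> T x \<le>
      (apriori_constant c \<kappa> D T + c * (1 + apriori_constant c \<kappa> D T) * T powr (1 - \<alpha>) + 1) *
      (1 + norm x0 + sup_norm T z + hoelder_norm \<alpha> T \<sigma>)" .
qed

theorem lemma4p2:
  fixes F2 :: "'z::euclidean_space \<Rightarrow> 'x::euclidean_space \<Rightarrow> 'x"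
    and \<kappa> D :: real
  assumes lip: "loc_lipschitz (\<lambda>(z, x). F2 z x)"
    and growth: "\<exists>c. \<forall>z x. norm (F2 z x) \<le> c * (1 + norm x + norm z)"
    and kappa_pos: "\<kappa> > 0" and D_pos: "D > 0"
    and dissip: "\<And>z x y. inner (F2 z x - F2 z y) (x - y) \<le> D - \<kappa> * (norm (x - y))\<^sup>2"
  shows
    \<comment> \<open>(1a) existence and uniqueness of global solutions\<close>
    "(\<forall>(x0::'x) (\<sigma>::real \<Rightarrow> 'x) (z::real \<Rightarrow> 'z).
        continuous_on {0..} \<sigma> \<and> \<sigma> 0 = 0 \<and> continuous_on {0..} z \<longrightarrow>
        (\<exists>x. is_global_solution (\<lambda>s v. F2 (z s) v) x0 \<sigma> x \<and>
             (\<forall>x'. is_global_solution (\<lambda>s v. F2 (z s) v) x0 \<sigma> x' \<longrightarrow> (\<forall>t\<ge>0. x' t = x t))) \<and>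
        (\<exists>y. is_global_solution (\<lambda>s v. - v) x0 \<sigma> y \<and>
             (\<forall>y'. is_global_solution (\<lambda>s v. - v) x0 \<sigma> y' \<longrightarrow> (\<forall>t\<ge>0. y' t = y t))))
     \<and>
     \<comment> \<open>(1b) bounds on any finite interval [0,T], constants independent of x0, sigma, z\<close>
     (\<forall>T>0. \<exists>C. \<forall>(x0::'x) (\<sigma>::real \<Rightarrow> 'x) (z::real \<Rightarrow> 'z) x y.
        continuous_on {0..} \<sigma> \<and> \<sigma> 0 = 0 \<and> continuous_on {0..} z \<and>
        is_global_solution (\<lambda>s v. F2 (z s) v) x0 \<sigma> x \<and>
        is_global_solution (\<lambda>s v. - v) x0 \<sigma> y \<longrightarrow>
        (\<forall>t\<in>{0..T}. (norm (x t - y t))\<^sup>2 \<le>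
            C * integral {0..t} (\<lambda>s. exp (- \<kappa> * (t - s)) * (1 + norm (y s) + norm (z s))\<^sup>2)) \<and>
        sup_norm T x \<le> C * (1 + norm x0 + sup_norm T \<sigma> + sup_norm T z))
     \<and>
     \<comment> \<open>(2) Hoelder regularity\<close>
     (\<forall>T>0. \<forall>\<alpha>. 0 < \<alpha> \<and> \<alpha> \<le> 1 \<longrightarrow> (\<exists>C. \<forall>(x0::'x) (\<sigma>::real \<Rightarrow> 'x) (z::real \<Rightarrow> 'z) x.
        continuous_on {0..} \<sigma> \<and> \<sigma> 0 = 0 \<and> continuous_on {0..} z \<and>
        hoelder_on \<alpha> T \<sigma> \<and>
        is_global_solution (\<lambda>s v. F2 (z s) v) x0 \<sigma> x \<longrightarrow>
        hoelder_on \<alpha> T x \<and>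
        hoelder_norm \<alpha> T x \<le> C * (1 + norm x0 + sup_norm T z + hoelder_norm \<alpha> T \<sigma>)))"
proof -
  obtain c where c: "\<And>z x. norm (F2 z x) \<le> c * (1 + norm x + norm z)"
    using growth by blast
  have c0: "0 \<le> c" using order_trans[OF norm_ge_zero c[of 0 0]] by simp
  have D0: "0 \<le> D" using D_pos by simp
  note F2_facts = lip c c0 kappa_pos D0 dissip
  have uminus_growth: "\<And>(z::'z) (x::'x). norm (- x) \<le> 1 * (1 + norm x + norm z)" by simp
  note uminus_facts = loc_lipschitz_uminus_snd uminus_growth zero_le_one zero_less_one order_refl
    uminus_dissipative
  show ?thesis
    apply (intro conjI allI impI)
    subgoal by (intro global_well_posedness[OF F2_facts]) auto
    subgoal by (intro global_well_posedness[OF uminus_facts]) auto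
    subgoal by (rule finite_horizon_estimates[OF F2_facts])
    subgoal by (intro hoelder_estimates[OF F2_facts]) auto
    done
qed

end
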